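(* If $G$ is a graph with no isolated vertices, then $\chi_{\mu_2}(G)\le \gamma_t(G)$.
   Context: A set $D\subseteq V(G)$ is a total dominating set if every vertex of $G$ has a neighbor in $D$; $\gamma_t(G)$ is the minimum cardinality of a total dominating set. A set $M\subseteq V(G)$ is a $2$-distance mutual-visibility set if for every two vertices $u,v\in M$ there exists a shortest $u,v$-path of length at most $2$ none of whose internal vertices lies in $M$. $\chi_{\mu_2}(G)$ is the minimum cardinality of a partition of $V(G)$ into $2$-distance mutual-visibility sets. *)

theory Defs
  imports Main "HOL-Library.Disjoint_Sets"
begin

definition simple_graph :: "'a set \<Rightarrow> ('a \<Rightarrow> 'a \<Rightarrow> bool) \<Rightarrow> bool" where
  "simple_graph V E \<longleftrightarrow> finite V \<and> (\<forall>u v. E u v \<longrightarrow> u \<in> V \<and> v \<in> V)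
     \<and> (\<forall>u v. E u v \<longrightarrow> E v u) \<and> (\<forall>v. \<not> E v v)"

definition no_isolated :: "'a set \<Rightarrow> ('a \<Rightarrow> 'a \<Rightarrow> bool) \<Rightarrow> bool" where
  "no_isolated V E \<longleftrightarrow> (\<forall>v\<in>V. \<exists>u\<in>V. E v u)"

definition total_dominating :: "'a set \<Rightarrow> ('a \<Rightarrow> 'a \<Rightarrow> bool) \<Rightarrow> 'a set \<Rightarrow> bool" where
  "total_dominating V E D \<longleftrightarrow> D \<subseteq> V \<and> (\<forall>v\<in>V. \<exists>u\<in>D. E v u)"

definition total_domination_number :: "'a set \<Rightarrow> ('a \<Rightarrow> 'a \<Rightarrow> bool) \<Rightarrow> nat" where
  "total_domination_number V E = (LEAST k. \<exists>D. total_dominating V E D \<and> card D = k)"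

text \<open>2-distance mutual-visibility: for distinct u, v in M there is a shortest
u,v-path of length at most 2 with no internal vertex in M.  Unfolded: either
u, v are adjacent (the edge is the shortest path, no internal vertices), or they
are non-adjacent (so a shortest path of length \<le> 2 has length exactly 2) and
have a common neighbour outside M.\<close>
definition dist2_mutual_visibility :: "'a set \<Rightarrow> ('a \<Rightarrow> 'a \<Rightarrow> bool) \<Rightarrow> 'a set \<Rightarrow> bool" where
  "dist2_mutual_visibility V E M \<longleftrightarrow> M \<subseteq> V \<and>
     (\<forall>u\<in>M. \<forall>v\<in>M. u \<noteq> v \<longrightarrow>
        E u v \<or> (\<exists>w\<in>V - M. E u w \<and> E w v))"

definition chi_mu2 :: "'a set \<Rightarrow> ('a \<Rightarrow> 'a \<Rightarrow> bool) \<Rightarrow> nat" where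
  "chi_mu2 V E = (LEAST k. \<exists>P. partition_on V P \<and>
      (\<forall>M\<in>P. dist2_mutual_visibility V E M) \<and> card P = k)"

end

theory Submission
  imports Defs
begin

text \<open>Let \<open>D\<close> be a minimum total dominating set and send every vertex \<open>v\<close> to a
neighbour \<open>f v \<in> D\<close>. The fibre of \<open>f\<close> over \<open>d\<close> avoids \<open>d\<close>, since no vertex is its own
neighbour, and any two of its vertices are adjacent or see each other through \<open>d\<close>.
So the nonempty fibres form a partition of \<open>V\<close> into at most \<open>|D|\<close> 2-distance
mutual-visibility sets.\<close>

lemma partition_on_fibres: "partition_on A ((\<lambda>y. {x\<in>A. f x = y}) ` f ` A)"
  by (auto intro!: partition_onI simp: disjnt_def)

lemma card_fibres_le:
  assumes "finite B" and "f ` A \<subseteq> B"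
  shows "card ((\<lambda>y. {x\<in>A. f x = y}) ` f ` A) \<le> card B"
proof -
  have "card ((\<lambda>y. {x\<in>A. f x = y}) ` f ` A) \<le> card (f ` A)"
    using assms finite_subset by (blast intro: card_image_le)
  also have "\<dots> \<le> card B"
    using assms by (rule card_mono)
  finally show ?thesis .
qed

lemma dist2_mutual_visibility_common_neighbour:
  assumes "symp E" and "M \<subseteq> V" and "w \<in> V - M" and "\<And>u. u \<in> M \<Longrightarrow> E u w"
  shows "dist2_mutual_visibility V E M"
  using assms unfolding dist2_mutual_visibility_def by (meson sympD)

lemma chi_mu2_le_card_partition:
  assumes "partition_on V P" and "\<forall>M\<in>P. dist2_mutual_visibility V E M"
  shows "chi_mu2 V E \<le> card P"
  unfolding chi_mu2_def by (rule Least_le) (use assms in blast)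

lemma chi_mu2_le_card_total_dominating:
  assumes graph: "simple_graph V E" and dom: "total_dominating V E D"
  shows "chi_mu2 V E \<le> card D"
proof -
  have DV: "D \<subseteq> V" and "finite D"
    using assms finite_subset unfolding simple_graph_def total_dominating_def by auto
  have "\<forall>v\<in>V. \<exists>u. u \<in> D \<and> E v u"
    using dom unfolding total_dominating_def by blast
  then obtain f where f: "\<And>v. v \<in> V \<Longrightarrow> f v \<in> D \<and> E v (f v)"
    by (metis bchoice)
  then have fV: "f ` V \<subseteq> D"
    by blast
  define fibre where "fibre d = {v\<in>V. f v = d}" for d
  have "partition_on V (fibre ` f ` V)"
    unfolding fibre_def by (rule partition_on_fibres)
  moreover have "dist2_mutual_visibility V E (fibre d)" if "d \<in> D" for d
  proof (rule dist2_mutual_visibility_common_neighbour)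
    show "symp E"
      using graph unfolding simple_graph_def by (blast intro: sympI)
    show "fibre d \<subseteq> V" and "\<And>u. u \<in> fibre d \<Longrightarrow> E u d"
      using f unfolding fibre_def by auto
    have "\<not> E d d"
      using graph unfolding simple_graph_def by blast
    moreover have "d \<in> V"
      using that DV by blast
    ultimately show "d \<in> V - fibre d"
      using f[of d] unfolding fibre_def by auto
  qed
  then have "\<forall>M\<in>fibre ` f ` V. dist2_mutual_visibility V E M"
    using fV by blast
  ultimately have "chi_mu2 V E \<le> card (fibre ` f ` V)"
    by (rule chi_mu2_le_card_partition)
  also have "\<dots> \<le> card D"
    unfolding fibre_def using \<open>finite D\<close> fV by (rule card_fibres_le)
  finally show ?thesis .
qed

lemma total_dominating_vertex_set: "no_isolated V E \<Longrightarrow> total_dominating V E V"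
  unfolding no_isolated_def total_dominating_def by blast

lemma total_domination_number_attained:
  assumes "total_dominating V E D"
  obtains D' where "total_dominating V E D'" and "card D' = total_domination_number V E"
proof -
  have "\<exists>D'. total_dominating V E D' \<and> card D' = total_domination_number V E"
    unfolding total_domination_number_def by (rule LeastI[of _ "card D"]) (use assms in blast)
  with that show ?thesis by blast
qed

theorem theorem3p2:
  fixes V :: "'a set" and E :: "'a \<Rightarrow> 'a \<Rightarrow> bool"
  assumes "simple_graph V E" and "no_isolated V E"
  shows "chi_mu2 V E \<le> total_domination_number V E"
proof -
  obtain D where "total_dominating V E D" and "card D = total_domination_number V E"
    using total_domination_number_attained total_dominating_vertex_set assms(2) .
  then show ?thesis
    using chi_mu2_le_card_total_dominating assms(1) by metis
qed

end
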